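(* Let $f^*$ be the norm on $\mathbb{R}^2$ whose unit ball is $\{(x_1,x_2): |x_1+x_2|\le4,\ |x_1-x_2|\le1\}$. Then there exists $\alpha=(\alpha_1,\alpha_2)\in\mathbb{R}^2\setminus\mathbb{Q}^2$ such that the sequence of all $f^*$-best simultaneous approximations $(p_\nu,a_\nu)$ to $\alpha$ has constant signature sequence: $\operatorname{sign}\xi_\nu=(+,+)$ for every $\nu$, where $\xi_\nu=\alpha p_\nu-a_\nu$.
   Context: For a vector $\eta=(\eta_1,\eta_2)$, $\operatorname{sign}\eta=(\operatorname{sign}\eta_1,\operatorname{sign}\eta_2)$. For a norm $f$ on $\mathbb{R}^n$ and $\alpha\in\mathbb{R}^n$, an $f$-best simultaneous approximation is an integer point $\tau=(p,a_1,\dots,a_n)\in\mathbb{Z}^{n+1}$ with $p\ge1$ such that $f(\alpha q-b)>f(\alpha p-a)$ for all $(q,b)\in\mathbb{Z}^{n+1}$ with $1\le q\le p-1$ and for all $(p,b)$ with $b\ne a$. They form a sequence $(p_\nu,a_\nu)$ with $p_1<p_2<\dots$. *)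

theory Defs
  imports Complex_Main
begin

definition fstar_ball :: "(real \<times> real) set" where
  "fstar_ball = {(x1, x2). \<bar>x1 + x2\<bar> \<le> 4 \<and> \<bar>x1 - x2\<bar> \<le> 1}"

definition minkowski_gauge :: "(real \<times> real) set \<Rightarrow> real \<times> real \<Rightarrow> real" where
  "minkowski_gauge B x = Inf {t. t > 0 \<and> (fst x / t, snd x / t) \<in> B}"

definition fstar :: "real \<times> real \<Rightarrow> real" where
  "fstar = minkowski_gauge fstar_ball"

definition approx_vec :: "real \<times> real \<Rightarrow> int \<Rightarrow> int \<times> int \<Rightarrow> real \<times> real" where
  "approx_vec \<alpha> q b = (fst \<alpha> * of_int q - of_int (fst b), snd \<alpha> * of_int q - of_int (snd b))"

definition best_sim_approx ::
  "(real \<times> real \<Rightarrow> real) \<Rightarrow> real \<times> real \<Rightarrow> int \<Rightarrow> int \<times> int \<Rightarrow> bool" where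
  "best_sim_approx f \<alpha> p a \<longleftrightarrow> p \<ge> 1 \<and>
     (\<forall>q b. 1 \<le> q \<and> q \<le> p - 1 \<longrightarrow> f (approx_vec \<alpha> q b) > f (approx_vec \<alpha> p a)) \<and>
     (\<forall>b. b \<noteq> a \<longrightarrow> f (approx_vec \<alpha> p b) > f (approx_vec \<alpha> p a))"

end

theory Submission
  imports Defs
begin

(* Let alpha_i = sum_k d_i(k) / Q_(k+1) with Q_0 = 1, Q_(k+1) = 64 Q_k^4 and digit vectors
   d(k) = (d_1(k), d_2(k)) alternating between (2,1) and (1,2). The convergents (Q_k, A(k))
   have errors e(k) = Q_k alpha - A(k) with both coordinates in (0, 1/(16 Q_k)], and
   e_1(k) - e_2(k) has the sign of d_1(k) - d_2(k), so it alternates with k.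
   In coordinates f*(x) = max (|x_1 + x_2| / 4, |x_1 - x_2|). Let 0 < q <= Q_(k+1) and let
   x = q alpha - b have a nonpositive coordinate. If (q, b) lies off the lattice spanned by
   (Q_k, A(k)) and (0, d(k)), a nonzero integer determinant forces f*(x) > 1/(16 Q_k) >= f*(e(k)).
   If it lies on it, N_k x = T d(k) + j e(k+1) with N_k = Q_(k+1) / Q_k, integers j > 0 and T,
   and the nonpositive coordinate forces T < 0; since e(k+1) tilts against d(k), this gives
   N_k |x_1 - x_2| > 1 >= N_k f*(e(k)). Either way (Q_k, A(k)) approximates better than (q, b),
   so every best approximation has both error coordinates positive. Irrationality of alpha_1
   follows from its errors e_1(k) being nonzero and tending to 0. *)

section \<open>The norm f*\<close>

definition fnorm :: "real \<Rightarrow> real \<Rightarrow> real" where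
  "fnorm a b = max (\<bar>a + b\<bar> / 4) \<bar>a - b\<bar>"

lemma minkowski_gauge_eqI:
  assumes "0 \<le> M" and "\<And>t. 0 < t \<Longrightarrow> (fst x / t, snd x / t) \<in> B \<longleftrightarrow> M \<le> t"
  shows "minkowski_gauge B x = M"
proof -
  have "{t. 0 < t \<and> (fst x / t, snd x / t) \<in> B} = {t. 0 < t \<and> M \<le> t}"
    using assms(2) by blast
  also have "\<dots> = (if M = 0 then {0<..} else {M..})"
    using assms(1) by auto
  finally show ?thesis
    unfolding minkowski_gauge_def by simp
qed

lemma fstar_eq_fnorm: "fstar (a, b) = fnorm a b"
  unfolding fstar_def
proof (rule minkowski_gauge_eqI)
  show "0 \<le> fnorm a b"
    by (simp add: fnorm_def)
  fix t :: real
  assume "0 < t"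
  then show "(fst (a, b) / t, snd (a, b) / t) \<in> fstar_ball \<longleftrightarrow> fnorm a b \<le> t"
    by (simp add: fstar_ball_def fnorm_def add_divide_distrib[symmetric]
        diff_divide_distrib[symmetric] abs_divide divide_le_eq mult.commute)
qed

lemma fnorm_scale: "0 \<le> c \<Longrightarrow> fnorm (c * a) (c * b) = c * fnorm a b"
  by (simp add: fnorm_def abs_mult max_mult_distrib_left
      flip: distrib_left right_diff_distrib)

lemma abs_diff_le_fnorm: "\<bar>a - b\<bar> \<le> fnorm a b"
  by (simp add: fnorm_def)

lemma abs_add_le_fnorm: "\<bar>a + b\<bar> \<le> 4 * fnorm a b"
  by (simp add: fnorm_def max_def)

lemma fnorm_le: "0 \<le> a \<Longrightarrow> 0 \<le> b \<Longrightarrow> a \<le> e \<Longrightarrow> b \<le> e \<Longrightarrow> fnorm a b \<le> e"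
  by (simp add: fnorm_def abs_le_iff)

lemma abs_cross_le_fnorm:
  assumes "u = 2 \<and> v = 1 \<or> u = 1 \<and> v = 2"
  shows "\<bar>a * v - b * u\<bar> \<le> 4 * fnorm a b"
  using assms abs_diff_le_fnorm[of a b] abs_add_le_fnorm[of a b] by (auto simp: abs_le_iff)

section \<open>Convergent denominators\<close>

fun conv_denom :: "nat \<Rightarrow> int" where
  "conv_denom 0 = 1"
| "conv_denom (Suc k) = 64 * conv_denom k ^ 4"

definition conv_ratio :: "nat \<Rightarrow> int" where
  "conv_ratio k = 64 * conv_denom k ^ 3"

lemma conv_denom_Suc_eq: "conv_denom (Suc k) = conv_ratio k * conv_denom k"
  by (simp add: conv_ratio_def power_Suc2 power_numeral_reduce)

declare conv_denom.simps(2) [simp del]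

lemma conv_denom_pos: "1 \<le> conv_denom k"
proof (induction k)
  case (Suc k)
  then have "1 \<le> conv_denom k ^ 4"
    by (rule one_le_power)
  then show ?case
    by (simp add: conv_denom.simps)
qed simp

lemma conv_ratio_ge: "64 * conv_denom k \<le> conv_ratio k"
proof -
  have "conv_denom k * 1 \<le> conv_denom k * conv_denom k ^ 2"
    using conv_denom_pos[of k] by (intro mult_left_mono one_le_power) auto
  then show ?thesis
    by (simp add: conv_ratio_def power3_eq_cube power2_eq_square)
qed

lemma even_conv_ratio: "even (conv_ratio k)"
  by (simp add: conv_ratio_def)

lemma conv_denom_ge_pow: "2 ^ i * conv_denom k \<le> conv_denom (i + k)"
proof (induction i)
  case (Suc i)
  have "2 * conv_denom (i + k) \<le> conv_ratio (i + k) * conv_denom (i + k)"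
    using conv_ratio_ge[of "i + k"] conv_denom_pos[of "i + k"] by simp
  with Suc show ?case
    by (simp add: conv_denom_Suc_eq[of "i + k"])
qed simp

lemma conv_denom_gt: "int k < conv_denom k"
proof -
  have "2 ^ k \<le> conv_denom k"
    using conv_denom_ge_pow[of k 0] by simp
  moreover have "int k < 2 ^ k"
    by (rule of_nat_less_two_power)
  ultimately show ?thesis
    by linarith
qed

lemma conv_denom_power_of_two: "\<exists>e. conv_denom k = 2 ^ e"
proof (induction k)
  case (Suc k)
  then obtain e where "conv_denom k = 2 ^ e" ..
  then have "conv_denom (Suc k) = 2 ^ (6 + 4 * e)"
    by (simp add: conv_denom.simps power_add power_mult mult.commute)
  then show ?case ..
qed (simp add: exI[of _ 0])

lemma coprime_conv_denom: "odd m \<Longrightarrow> coprime (conv_denom k) m"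
  using conv_denom_power_of_two[of k] by auto

section \<open>Digit series and their convergents\<close>

fun conv_numer :: "(nat \<Rightarrow> int) \<Rightarrow> nat \<Rightarrow> int" where
  "conv_numer d 0 = 0"
| "conv_numer d (Suc k) = conv_ratio k * conv_numer d k + d k"

definition alpha :: "(nat \<Rightarrow> int) \<Rightarrow> real" where
  "alpha d = (\<Sum>i. of_int (d i) / of_int (conv_denom (Suc i)))"

definition conv_error :: "(nat \<Rightarrow> int) \<Rightarrow> nat \<Rightarrow> real" where
  "conv_error d k = of_int (conv_denom k) * alpha d - of_int (conv_numer d k)"

lemma conv_error_Suc:
  "of_int (conv_ratio k) * conv_error d k = of_int (d k) + conv_error d (Suc k)"
  by (simp add: conv_error_def conv_denom_Suc_eq algebra_simps)

lemma conv_numer_eq_partial_sum: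
  "(of_int (conv_numer d k) :: real)
     = of_int (conv_denom k) * (\<Sum>i<k. of_int (d i) / of_int (conv_denom (Suc i)))"
proof (induction k)
  case (Suc k)
  have "0 < (of_int (conv_denom k) :: real)" "0 < (of_int (conv_ratio k) :: real)"
    using conv_denom_pos[of k] conv_ratio_ge[of k] by linarith+
  with Suc show ?case
    by (simp add: conv_denom_Suc_eq[of k] field_simps)
qed simp

lemma digit_series_term_le:
  assumes "\<And>i. d i \<in> {1..2}"
  shows "(of_int (d (i + k)) / of_int (conv_denom (Suc (i + k))) :: real)
           \<le> 2 / of_int (conv_denom (Suc k)) * (1 / 2) ^ i"
proof -
  have pos: "0 < (of_int (conv_denom (Suc k)) :: real)"
    using conv_denom_pos[of "Suc k"] by linarith
  have grow: "of_int (2 ^ i * conv_denom (Suc k)) \<le> (of_int (conv_denom (Suc (i + k))) :: real)"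
    using conv_denom_ge_pow[of i "Suc k"] by (simp only: of_int_le_iff add_Suc_right)
  have "of_int (d (i + k)) / of_int (conv_denom (Suc (i + k))) \<le> 2 / (of_int (conv_denom (Suc (i + k))) :: real)"
    using assms[of "i + k"] conv_denom_pos[of "Suc (i + k)"] by (intro divide_right_mono) auto
  also have "\<dots> \<le> 2 / (2 ^ i * of_int (conv_denom (Suc k)))"
    using pos grow conv_denom_pos[of "Suc (i + k)"] by (intro divide_left_mono mult_pos_pos) auto
  also have "\<dots> = 2 / of_int (conv_denom (Suc k)) * (1 / 2) ^ i"
    by (simp add: power_one_over)
  finally show ?thesis .
qed

lemma digit_series_tail:
  assumes "\<And>i. d i \<in> {1..2}"
  shows "summable (\<lambda>i. of_int (d (i + k)) / (of_int (conv_denom (Suc (i + k))) :: real))"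
    and "(\<Sum>i. of_int (d (i + k)) / of_int (conv_denom (Suc (i + k)))) \<le> 4 / (of_int (conv_denom (Suc k)) :: real)"
    and "0 < (\<Sum>i. of_int (d (i + k)) / (of_int (conv_denom (Suc (i + k))) :: real))"
proof -
  let ?t = "\<lambda>i. of_int (d (i + k)) / (of_int (conv_denom (Suc (i + k))) :: real)"
  let ?g = "\<lambda>i. 2 / of_int (conv_denom (Suc k)) * (1 / 2 :: real) ^ i"
  have pos: "0 < ?t i" for i
    using assms[of "i + k"] conv_denom_pos[of "Suc (i + k)"] by simp
  have half: "summable (\<lambda>i. (1 / 2 :: real) ^ i)" "(\<Sum>i. (1 / 2 :: real) ^ i) = 2"
    by (simp_all add: summable_geometric suminf_geometric)
  have geom: "summable ?g" "suminf ?g = 4 / of_int (conv_denom (Suc k))"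
    using summable_mult[OF half(1)] by (simp_all only: suminf_mult[OF half(1)] half(2))
  have le: "?t i \<le> ?g i" for i
    using digit_series_term_le[of d i k, OF assms] .
  have norm_le: "norm (?t i) \<le> ?g i" for i
    using le[of i] pos[of i] by (simp only: real_norm_def abs_of_pos)
  show "summable ?t"
    by (rule summable_comparison_test'[OF geom(1), where N = 0]) (rule norm_le)
  then have "suminf ?t \<le> suminf ?g"
    using le geom(1) by (intro suminf_le)
  then show "suminf ?t \<le> 4 / of_int (conv_denom (Suc k))"
    by (simp only: geom(2))
  show "0 < suminf ?t"
    using \<open>summable ?t\<close> pos by (simp add: suminf_pos)
qed

lemma conv_error_eq_tail:
  assumes "\<And>i. d i \<in> {1..2}"
  shows "conv_error d k
           = of_int (conv_denom k) * (\<Sum>i. of_int (d (i + k)) / of_int (conv_denom (Suc (i + k))))"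
proof -
  have "summable (\<lambda>i. of_int (d i) / (of_int (conv_denom (Suc i)) :: real))"
    using digit_series_tail(1)[of d 0, OF assms] by simp
  then have "alpha d = (\<Sum>i. of_int (d (i + k)) / of_int (conv_denom (Suc (i + k))))
                        + (\<Sum>i<k. of_int (d i) / of_int (conv_denom (Suc i)))"
    unfolding alpha_def by (rule suminf_split_initial_segment)
  then show ?thesis
    by (simp add: conv_error_def conv_numer_eq_partial_sum algebra_simps)
qed

lemma conv_error_pos:
  assumes "\<And>i. d i \<in> {1..2}"
  shows "0 < conv_error d k"
  using digit_series_tail(3)[of d k, OF assms] conv_denom_pos[of k]
  by (simp add: conv_error_eq_tail[OF assms])

lemma conv_error_le:
  assumes "\<And>i. d i \<in> {1..2}"
  shows "conv_error d k \<le> 1 / (16 * of_int (conv_denom k))"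
proof -
  have Q: "0 < (of_int (conv_denom k) :: real)" "64 * of_int (conv_denom k) \<le> (of_int (conv_ratio k) :: real)"
    using conv_denom_pos[of k] conv_ratio_ge[of k] by linarith+
  have "conv_error d k \<le> of_int (conv_denom k) * (4 / of_int (conv_denom (Suc k)))"
    unfolding conv_error_eq_tail[OF assms]
    using digit_series_tail(2)[of d k, OF assms] Q by (intro mult_left_mono) auto
  also have "\<dots> = 4 / of_int (conv_ratio k)"
    using Q by (simp add: conv_denom_Suc_eq)
  also have "\<dots> \<le> 4 / (64 * of_int (conv_denom k))"
    using Q by (intro divide_left_mono) auto
  finally show ?thesis
    by simp
qed

section \<open>The alternating digits\<close>

definition digit1 :: "nat \<Rightarrow> int" where
  "digit1 k = (if even k then 2 else 1)"

definition digit2 :: "nat \<Rightarrow> int" where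
  "digit2 k = 3 - digit1 k"

lemma digit_cases: "digit1 k = 2 \<and> digit2 k = 1 \<or> digit1 k = 1 \<and> digit2 k = 2"
  by (simp add: digit1_def digit2_def)

lemma digit1_range: "digit1 k \<in> {1..2}" and digit2_range: "digit2 k \<in> {1..2}"
  using digit_cases[of k] by auto

lemma digit_diff_Suc: "digit1 (Suc k) - digit2 (Suc k) = digit2 k - digit1 k"
  by (simp add: digit1_def digit2_def)

lemma conv_error_digit_bounds:
  "0 < conv_error digit1 k" "conv_error digit1 k \<le> 1 / (16 * of_int (conv_denom k))"
  "0 < conv_error digit2 k" "conv_error digit2 k \<le> 1 / (16 * of_int (conv_denom k))"
  using conv_error_pos[of digit1] conv_error_pos[of digit2] conv_error_le[of digit1] conv_error_le[of digit2]
    digit1_range digit2_range by blast+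

lemma conv_error_diff_sign:
  "0 < of_int (digit1 k - digit2 k) * (conv_error digit1 k - conv_error digit2 k)"
proof -
  define N where "N = (of_int (conv_ratio k) :: real)"
  define f1 f2 where "f1 = conv_error digit1 (Suc k)" and "f2 = conv_error digit2 (Suc k)"
  have "N \<ge> 64"
    using conv_ratio_ge[of k] conv_denom_pos[of k] unfolding N_def by linarith
  have "1 / (16 * of_int (conv_denom (Suc k))) \<le> (1 / 16 :: real)"
    using conv_denom_pos[of "Suc k"] by (simp add: divide_le_eq)
  then have f: "0 < f1" "f1 \<le> 1 / 16" "0 < f2" "f2 \<le> 1 / 16"
    unfolding f1_def f2_def using conv_error_digit_bounds[of "Suc k"] by linarith+
  have eq: "N * (conv_error digit1 k - conv_error digit2 k) = of_int (digit1 k - digit2 k) + (f1 - f2)"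
    using conv_error_Suc[of k digit1] conv_error_Suc[of k digit2]
    unfolding N_def f1_def f2_def by (simp add: algebra_simps)
  have "0 < of_int (digit1 k - digit2 k) * (N * (conv_error digit1 k - conv_error digit2 k))"
    unfolding eq using digit_cases[of k] f by (elim disjE) simp_all
  then have "0 < N * (of_int (digit1 k - digit2 k) * (conv_error digit1 k - conv_error digit2 k))"
    by (simp only: mult.left_commute)
  then show ?thesis
    by (rule zero_less_mult_pos) (use \<open>N \<ge> 64\<close> in linarith)
qed

lemma conv_error_diff_sign_Suc:
  "of_int (digit1 k - digit2 k) * (conv_error digit1 (Suc k) - conv_error digit2 (Suc k)) < 0"
  using conv_error_diff_sign[of "Suc k"] unfolding digit_diff_Suc
  by (simp add: algebra_simps)

lemma odd_conv_numer_cross: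
  "odd (conv_numer digit1 (Suc k) * digit2 (Suc k) - conv_numer digit2 (Suc k) * digit1 (Suc k))"
proof -
  obtain m where N: "conv_ratio k = 2 * m"
    using even_conv_ratio[of k] ..
  have eq: "conv_numer digit1 (Suc k) * digit2 (Suc k) - conv_numer digit2 (Suc k) * digit1 (Suc k)
      = 2 * (m * (conv_numer digit1 k * digit2 (Suc k) - conv_numer digit2 k * digit1 (Suc k)))
        + (digit1 k * digit2 (Suc k) - digit2 k * digit1 (Suc k))"
    by (simp add: N algebra_simps)
  have "odd (digit1 k * digit2 (Suc k) - digit2 k * digit1 (Suc k))"
    by (simp add: digit1_def digit2_def)
  then show ?thesis
    by (simp only: eq) simp
qed

lemma conv_denom_dvd_cancel:
  assumes "conv_denom k dvd q * (conv_numer digit1 k * digit2 k - conv_numer digit2 k * digit1 k)"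
  shows "conv_denom k dvd q"
proof (cases k)
  case (Suc m)
  then have "coprime (conv_denom k) (conv_numer digit1 k * digit2 k - conv_numer digit2 k * digit1 k)"
    using odd_conv_numer_cross[of m] by (simp add: coprime_conv_denom)
  with assms show ?thesis
    by (simp add: coprime_dvd_mult_left_iff)
qed simp

section \<open>Comparison with the convergents\<close>

lemma le_abs_of_int_mult:
  fixes N :: real
  assumes "c \<noteq> 0" "0 \<le> N"
  shows "N \<le> \<bar>of_int c * N\<bar>"
proof -
  have "1 * N \<le> \<bar>of_int c\<bar> * N"
    using assms by (intro mult_right_mono) linarith+
  then show ?thesis
    using assms(2) by (simp add: abs_mult)
qed

lemma conv_denom_mul_fnorm_conv_error_le:
  "of_int (conv_denom k) * fnorm (conv_error digit1 k) (conv_error digit2 k) \<le> 1 / 16"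
proof -
  have "0 < (of_int (conv_denom k) :: real)"
    using conv_denom_pos[of k] by linarith
  moreover have "fnorm (conv_error digit1 k) (conv_error digit2 k) \<le> 1 / (16 * of_int (conv_denom k))"
    using conv_error_digit_bounds[of k] by (intro fnorm_le) auto
  ultimately show ?thesis
    by (simp add: field_simps)
qed

lemma conv_ratio_mul_fnorm_conv_error_le:
  "of_int (conv_ratio k) * fnorm (conv_error digit1 k) (conv_error digit2 k) \<le> 1"
proof -
  define f1 f2 where "f1 = conv_error digit1 (Suc k)" and "f2 = conv_error digit2 (Suc k)"
  have "1 / (16 * of_int (conv_denom (Suc k))) \<le> (1 / 16 :: real)"
    using conv_denom_pos[of "Suc k"] by (simp add: divide_le_eq)
  then have f: "0 < f1" "f1 \<le> 1 / 16" "0 < f2" "f2 \<le> 1 / 16"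
    unfolding f1_def f2_def using conv_error_digit_bounds[of "Suc k"] by linarith+
  have sign: "of_int (digit1 k - digit2 k) * (f1 - f2) < 0"
    unfolding f1_def f2_def by (rule conv_error_diff_sign_Suc)
  have "of_int (conv_ratio k) * fnorm (conv_error digit1 k) (conv_error digit2 k)
      = fnorm (of_int (digit1 k) + f1) (of_int (digit2 k) + f2)"
    using conv_ratio_ge[of k] conv_denom_pos[of k]
    by (simp add: f1_def f2_def conv_error_Suc flip: fnorm_scale)
  also have "\<dots> \<le> 1"
    using digit_cases[of k] f sign by (elim disjE) (simp_all add: fnorm_def abs_le_iff)
  finally show ?thesis .
qed

lemma conv_error_cross_identity:
  fixes q b1 b2 :: int
  shows "of_int (conv_denom k) * of_int (conv_ratio k)
           * ((alpha d1 * q - b1) * d2 k - (alpha d2 * q - b2) * d1 k)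
         = of_int ((q * conv_numer d1 k - conv_denom k * b1) * d2 k
                   - (q * conv_numer d2 k - conv_denom k * b2) * d1 k) * of_int (conv_ratio k)
           + q * (conv_error d1 (Suc k) * d2 k - conv_error d2 (Suc k) * d1 k)"
  by (simp add: conv_error_def conv_denom_Suc_eq algebra_simps)

lemma conv_error_cross_small:
  fixes q :: int
  assumes "0 < q" "q \<le> conv_denom (Suc k)"
  shows "\<bar>q * (conv_error digit1 (Suc k) * digit2 k - conv_error digit2 (Suc k) * digit1 k)\<bar> \<le> 1 / 8"
proof -
  define Q' where "Q' = (of_int (conv_denom (Suc k)) :: real)"
  have "0 < Q'"
    unfolding Q'_def using conv_denom_pos[of "Suc k"] by linarith
  have "\<bar>conv_error digit1 (Suc k) * digit2 k - conv_error digit2 (Suc k) * digit1 k\<bar> \<le> 1 / (8 * Q')"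
    using conv_error_digit_bounds[of "Suc k"] digit_cases[of k] unfolding Q'_def
    by (auto simp: abs_le_iff)
  moreover have "of_int q \<le> Q'"
    unfolding Q'_def using assms(2) by simp
  ultimately have "of_int q * \<bar>conv_error digit1 (Suc k) * digit2 k - conv_error digit2 (Suc k) * digit1 k\<bar>
      \<le> Q' * (1 / (8 * Q'))"
    using \<open>0 < Q'\<close> by (intro mult_mono) auto
  also have "\<dots> = 1 / 8"
    using \<open>0 < Q'\<close> by simp
  finally show ?thesis
    using assms(1) by (simp add: abs_mult)
qed

(* The integer c measures how far (q, b) is from the lattice spanned by (Q_k, A(k)) and (0, d(k)). *)
lemma fnorm_conv_error_lt_off_lattice:
  fixes q b1 b2 :: int
  assumes q: "0 < q" "q \<le> conv_denom (Suc k)"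
    and c: "(q * conv_numer digit1 k - conv_denom k * b1) * digit2 k
              \<noteq> (q * conv_numer digit2 k - conv_denom k * b2) * digit1 k"
  shows "fnorm (conv_error digit1 k) (conv_error digit2 k) < fnorm (alpha digit1 * q - b1) (alpha digit2 * q - b2)"
proof -
  define c where "c = (q * conv_numer digit1 k - conv_denom k * b1) * digit2 k
                      - (q * conv_numer digit2 k - conv_denom k * b2) * digit1 k"
  define Q N where "Q = (of_int (conv_denom k) :: real)" and "N = (of_int (conv_ratio k) :: real)"
  define x1 x2 where "x1 = alpha digit1 * q - b1" and "x2 = alpha digit2 * q - b2"
  define X R where "X = x1 * digit2 k - x2 * digit1 k"
    and "R = q * (conv_error digit1 (Suc k) * digit2 k - conv_error digit2 (Suc k) * digit1 k)"
  have QN: "1 \<le> Q" "64 * Q \<le> N"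
    unfolding Q_def N_def using conv_denom_pos[of k] conv_ratio_ge[of k] by linarith+
  have "Q * N * X = of_int c * N + R"
    unfolding Q_def N_def X_def x1_def x2_def c_def R_def by (rule conv_error_cross_identity)
  moreover have "\<bar>R\<bar> \<le> 1 / 8"
    unfolding R_def using q by (rule conv_error_cross_small)
  moreover have "N \<le> \<bar>of_int c * N\<bar>"
    using c QN unfolding c_def by (intro le_abs_of_int_mult) auto
  moreover have "\<bar>of_int c * N\<bar> \<le> \<bar>Q * N * X\<bar> + \<bar>R\<bar>"
    using abs_triangle_ineq4[of "Q * N * X" R] calculation(1) by simp
  ultimately have "N - 1 / 8 \<le> \<bar>Q * N * X\<bar>"
    by linarith
  also have "\<dots> \<le> Q * N * (4 * fnorm x1 x2)"
  proof -
    have "\<bar>X\<bar> \<le> 4 * fnorm x1 x2"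
      unfolding X_def using digit_cases[of k] by (intro abs_cross_le_fnorm) auto
    then show ?thesis
      using QN by (simp add: abs_mult mult_left_mono)
  qed
  finally have "N - 1 / 8 \<le> 4 * N * (Q * fnorm x1 x2)"
    by (simp add: algebra_simps)
  then have "1 / 16 < Q * fnorm x1 x2"
    using QN mult_left_mono[of "Q * fnorm x1 x2" "1 / 16" "4 * N"] by linarith
  moreover have "Q * fnorm (conv_error digit1 k) (conv_error digit2 k) \<le> 1 / 16"
    unfolding Q_def by (rule conv_denom_mul_fnorm_conv_error_le)
  ultimately have "Q * fnorm (conv_error digit1 k) (conv_error digit2 k) < Q * fnorm x1 x2"
    by linarith
  then show ?thesis
    unfolding x1_def x2_def using QN by (simp add: mult_less_cancel_left_pos)
qed

lemma lattice_point_decomp: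
  fixes q b1 b2 :: int
  assumes "(q * conv_numer digit1 k - conv_denom k * b1) * digit2 k
             = (q * conv_numer digit2 k - conv_denom k * b2) * digit1 k"
  obtains j n where "q = conv_denom k * j"
    and "b1 = j * conv_numer digit1 k - n * digit1 k" and "b2 = j * conv_numer digit2 k - n * digit2 k"
proof -
  have "q * (conv_numer digit1 k * digit2 k - conv_numer digit2 k * digit1 k)
      = conv_denom k * (b1 * digit2 k - b2 * digit1 k)"
    using assms by algebra
  then have "conv_denom k dvd q * (conv_numer digit1 k * digit2 k - conv_numer digit2 k * digit1 k)"
    by (simp only: dvd_triv_left)
  then have "conv_denom k dvd q"
    by (rule conv_denom_dvd_cancel)
  then obtain j where j: "q = conv_denom k * j" ..
  have "conv_denom k * ((j * conv_numer digit1 k - b1) * digit2 k)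
      = conv_denom k * ((j * conv_numer digit2 k - b2) * digit1 k)"
    using assms unfolding j by algebra
  then have W: "(j * conv_numer digit1 k - b1) * digit2 k = (j * conv_numer digit2 k - b2) * digit1 k"
    using conv_denom_pos[of k] by simp
  obtain n where "j * conv_numer digit1 k - b1 = n * digit1 k" "j * conv_numer digit2 k - b2 = n * digit2 k"
    using digit_cases[of k]
  proof (elim disjE conjE)
    assume "digit1 k = 2" "digit2 k = 1"
    with W show thesis
      by (intro that[of "j * conv_numer digit2 k - b2"]) simp_all
  next
    assume "digit1 k = 1" "digit2 k = 2"
    with W show thesis
      by (intro that[of "j * conv_numer digit1 k - b1"]) simp_all
  qed
  with j show thesis
    by (intro that[of j n]) linarith+
qed

lemma conv_ratio_mul_lattice_error:
  fixes j n :: int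
  shows "of_int (conv_ratio k) * (alpha d * of_int (conv_denom k * j) - of_int (j * conv_numer d k - n * d k))
         = of_int ((n * conv_ratio k + j) * d k) + of_int j * conv_error d (Suc k)"
  by (simp add: conv_error_def conv_denom_Suc_eq algebra_simps)

lemma lattice_coeff_neg:
  fixes j n :: int and k :: nat
  defines "x1 \<equiv> alpha digit1 * of_int (conv_denom k * j) - of_int (j * conv_numer digit1 k - n * digit1 k)"
    and "x2 \<equiv> alpha digit2 * of_int (conv_denom k * j) - of_int (j * conv_numer digit2 k - n * digit2 k)"
  assumes "0 < j" and "x1 \<le> 0 \<or> x2 \<le> 0"
  shows "n * conv_ratio k + j \<le> -1"
proof (rule ccontr)
  assume "\<not> n * conv_ratio k + j \<le> -1"
  then have "0 \<le> (n * conv_ratio k + j) * digit1 k" "0 \<le> (n * conv_ratio k + j) * digit2 k"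
    using digit1_range[of k] digit2_range[of k] by (auto intro!: mult_nonneg_nonneg)
  then have "0 \<le> (of_int ((n * conv_ratio k + j) * digit1 k) :: real)"
    "0 \<le> (of_int ((n * conv_ratio k + j) * digit2 k) :: real)"
    by (simp_all only: of_int_0_le_iff)
  moreover have "0 < of_int j * conv_error digit1 (Suc k)" "0 < of_int j * conv_error digit2 (Suc k)"
    using \<open>0 < j\<close> conv_error_digit_bounds[of "Suc k"] by simp_all
  ultimately have "0 < of_int (conv_ratio k) * x1" "0 < of_int (conv_ratio k) * x2"
    unfolding x1_def x2_def conv_ratio_mul_lattice_error by linarith+
  moreover have "(0 :: real) < of_int (conv_ratio k)"
    using conv_ratio_ge[of k] conv_denom_pos[of k] by linarith
  ultimately have "0 < x1" "0 < x2"
    by (simp_all add: zero_less_mult_iff)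
  with assms(4) show False
    by linarith
qed

lemma fnorm_conv_error_lt_on_lattice:
  fixes q b1 b2 :: int
  assumes q: "0 < q"
    and c: "(q * conv_numer digit1 k - conv_denom k * b1) * digit2 k
              = (q * conv_numer digit2 k - conv_denom k * b2) * digit1 k"
    and nonpos: "alpha digit1 * q - b1 \<le> 0 \<or> alpha digit2 * q - b2 \<le> 0"
  shows "fnorm (conv_error digit1 k) (conv_error digit2 k) < fnorm (alpha digit1 * q - b1) (alpha digit2 * q - b2)"
proof -
  obtain j n where j: "q = conv_denom k * j"
    and b: "b1 = j * conv_numer digit1 k - n * digit1 k" "b2 = j * conv_numer digit2 k - n * digit2 k"
    using c by (rule lattice_point_decomp)
  have "0 < j"
    using q conv_denom_pos[of k] unfolding j by (simp add: zero_less_mult_iff)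
  define T where "T = n * conv_ratio k + j"
  define N where "N = (of_int (conv_ratio k) :: real)"
  define D1 D2 where "D1 = (of_int (digit1 k) :: real)" and "D2 = (of_int (digit2 k) :: real)"
  define f1 f2 where "f1 = conv_error digit1 (Suc k)" and "f2 = conv_error digit2 (Suc k)"
  define x1 x2 where "x1 = alpha digit1 * q - b1" and "x2 = alpha digit2 * q - b2"
  have N: "64 \<le> N"
    using conv_ratio_ge[of k] conv_denom_pos[of k] unfolding N_def by linarith
  have Nx: "N * x1 = of_int T * D1 + of_int j * f1" "N * x2 = of_int T * D2 + of_int j * f2"
    unfolding N_def T_def D1_def D2_def f1_def f2_def x1_def x2_def j b
    using conv_ratio_mul_lattice_error[of k digit1 j n] conv_ratio_mul_lattice_error[of k digit2 j n]
    by simp_all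
  have "T \<le> -1"
    using \<open>0 < j\<close> nonpos unfolding T_def j b by (rule lattice_coeff_neg)
  have "of_int (digit1 k - digit2 k) * (N * (x1 - x2))
      = of_int T + of_int j * (of_int (digit1 k - digit2 k) * (f1 - f2))"
    using digit_cases[of k] unfolding right_diff_distrib Nx D1_def D2_def
    by (elim disjE) (simp_all add: algebra_simps)
  moreover have "of_int j * (of_int (digit1 k - digit2 k) * (f1 - f2)) < 0"
    using \<open>0 < j\<close> conv_error_diff_sign_Suc[of k] unfolding f1_def f2_def
    by (simp add: mult_pos_neg)
  ultimately have "1 < \<bar>of_int (digit1 k - digit2 k) * (N * (x1 - x2))\<bar>"
    using \<open>T \<le> -1\<close> by linarith
  also have "\<dots> = N * \<bar>x1 - x2\<bar>"
    using digit_cases[of k] N by (auto simp: abs_mult)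
  also have "\<dots> \<le> N * fnorm x1 x2"
    using N abs_diff_le_fnorm[of x1 x2] by simp
  finally have "N * fnorm (conv_error digit1 k) (conv_error digit2 k) < N * fnorm x1 x2"
    using conv_ratio_mul_fnorm_conv_error_le[of k] unfolding N_def by linarith
  then show ?thesis
    unfolding x1_def x2_def using N by (simp add: mult_less_cancel_left_pos)
qed

lemma fnorm_conv_error_lt:
  fixes q b1 b2 :: int
  assumes "0 < q" "q \<le> conv_denom (Suc k)"
    and "alpha digit1 * q - b1 \<le> 0 \<or> alpha digit2 * q - b2 \<le> 0"
  shows "fnorm (conv_error digit1 k) (conv_error digit2 k) < fnorm (alpha digit1 * q - b1) (alpha digit2 * q - b2)"
  using assms fnorm_conv_error_lt_on_lattice fnorm_conv_error_lt_off_lattice by blast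

section \<open>Best approximations\<close>

lemma best_sim_approx_lt:
  assumes "best_sim_approx f \<alpha> p a" "1 \<le> q" "q \<le> p" "(q, b) \<noteq> (p, a)"
  shows "f (approx_vec \<alpha> p a) < f (approx_vec \<alpha> q b)"
  using assms unfolding best_sim_approx_def by (cases b, cases "q = p") auto

lemma conv_denom_bracket:
  assumes "1 \<le> p"
  obtains k where "conv_denom k \<le> p" "p \<le> conv_denom (Suc k)"
proof (cases "p \<le> conv_denom 0")
  case True
  with assms conv_denom_pos[of 1] show ?thesis
    by (intro that[of 0]) simp_all
next
  case False
  have "p \<le> conv_denom (nat p)"
    using conv_denom_gt[of "nat p"] assms by simp
  with False obtain k where "\<not> p \<le> conv_denom k" "p \<le> conv_denom (Suc k)"
    using ex_least_nat_less[of "\<lambda>m. p \<le> conv_denom m"] by blast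
  then show ?thesis
    by (intro that[of k]) simp_all
qed

lemma not_rat_if_approximable:
  fixes x :: real
  assumes "\<And>e. 0 < e \<Longrightarrow> \<exists>q a :: int. 0 < \<bar>of_int q * x - of_int a\<bar> \<and> \<bar>of_int q * x - of_int a\<bar> < e"
  shows "x \<notin> \<rat>"
proof
  assume "x \<in> \<rat>"
  then obtain r s :: int where s: "0 < s" and x: "x = of_int r / of_int s"
    by (auto elim!: Rats_cases')
  obtain q a :: int where qa: "0 < \<bar>of_int q * x - of_int a\<bar>" "\<bar>of_int q * x - of_int a\<bar> < 1 / of_int s"
    using assms[of "1 / of_int s"] s by auto
  have eq: "of_int q * x - of_int a = of_int (q * r - a * s) / of_int s"
    using s unfolding x by (simp add: field_simps)
  have "q * r - a * s \<noteq> 0"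
  proof
    assume "q * r - a * s = 0"
    then have "of_int q * x - of_int a = 0"
      unfolding eq by (simp only: of_int_0 div_0)
    with qa(1) show False
      by simp
  qed
  then have "1 \<le> \<bar>of_int (q * r - a * s) :: real\<bar>"
    by linarith
  then have "1 / of_int s \<le> \<bar>of_int (q * r - a * s) :: real\<bar> / of_int s"
    using s by (intro divide_right_mono) auto
  also have "\<dots> = \<bar>of_int q * x - of_int a\<bar>"
    using s unfolding eq abs_divide by simp
  finally show False
    using qa(2) by linarith
qed

lemma alpha_digit1_not_rat: "alpha digit1 \<notin> \<rat>"
proof (rule not_rat_if_approximable)
  fix e :: real
  assume "0 < e"
  then obtain k where "0 < k" "inverse (of_nat k) < e"
    using ex_inverse_of_nat_less by blast
  have "real k < of_int (conv_denom k)"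
    using conv_denom_gt[of k] by linarith
  then have "1 / (16 * of_int (conv_denom k)) < (inverse (of_nat k) :: real)"
    using \<open>0 < k\<close> by (simp add: field_simps)
  then have "0 < conv_error digit1 k" "conv_error digit1 k < e"
    using conv_error_digit_bounds[of k] \<open>inverse (of_nat k) < e\<close> by linarith+
  then show "\<exists>q a :: int. 0 < \<bar>of_int q * alpha digit1 - of_int a\<bar> \<and> \<bar>of_int q * alpha digit1 - of_int a\<bar> < e"
    unfolding conv_error_def by (intro exI[of _ "conv_denom k"] exI[of _ "conv_numer digit1 k"]) simp
qed

lemma best_sim_approx_fstar_pos:
  assumes best: "best_sim_approx fstar (alpha digit1, alpha digit2) p (a1, a2)"
  shows "0 < alpha digit1 * p - a1 \<and> 0 < alpha digit2 * p - a2"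
proof (rule ccontr)
  assume "\<not> ?thesis"
  then have nonpos: "alpha digit1 * p - a1 \<le> 0 \<or> alpha digit2 * p - a2 \<le> 0"
    by linarith
  have "1 \<le> p"
    using best unfolding best_sim_approx_def by simp
  then obtain k where k: "conv_denom k \<le> p" "p \<le> conv_denom (Suc k)"
    by (rule conv_denom_bracket)
  have approx_k: "approx_vec (alpha digit1, alpha digit2) (conv_denom k) (conv_numer digit1 k, conv_numer digit2 k)
      = (conv_error digit1 k, conv_error digit2 k)"
    by (simp add: approx_vec_def conv_error_def mult.commute)
  have "(conv_denom k, (conv_numer digit1 k, conv_numer digit2 k)) \<noteq> (p, (a1, a2))"
    using nonpos conv_error_digit_bounds[of k] unfolding conv_error_def by (auto simp: mult.commute)
  then have "fstar (approx_vec (alpha digit1, alpha digit2) p (a1, a2))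
      < fstar (approx_vec (alpha digit1, alpha digit2) (conv_denom k) (conv_numer digit1 k, conv_numer digit2 k))"
    using best conv_denom_pos[of k] k(1) by (intro best_sim_approx_lt) auto
  then have "fnorm (alpha digit1 * p - a1) (alpha digit2 * p - a2) < fnorm (conv_error digit1 k) (conv_error digit2 k)"
    unfolding approx_k by (simp add: approx_vec_def fstar_eq_fnorm)
  moreover have "fnorm (conv_error digit1 k) (conv_error digit2 k) < fnorm (alpha digit1 * p - a1) (alpha digit2 * p - a2)"
    using \<open>1 \<le> p\<close> k(2) nonpos by (intro fnorm_conv_error_lt) auto
  ultimately show False
    by linarith
qed

theorem theorem2p7:
  shows "\<exists>\<alpha> :: real \<times> real. \<not> (fst \<alpha> \<in> \<rat> \<and> snd \<alpha> \<in> \<rat>) \<and>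
     (\<forall>p a. best_sim_approx fstar \<alpha> p a \<longrightarrow>
        sgn (fst (approx_vec \<alpha> p a)) = 1 \<and> sgn (snd (approx_vec \<alpha> p a)) = 1)"
proof (intro exI[of _ "(alpha digit1, alpha digit2)"] conjI allI impI)
  show "\<not> (fst (alpha digit1, alpha digit2) \<in> \<rat> \<and> snd (alpha digit1, alpha digit2) \<in> \<rat>)"
    using alpha_digit1_not_rat by simp
  fix p a
  assume "best_sim_approx fstar (alpha digit1, alpha digit2) p a"
  then have "0 < alpha digit1 * p - fst a \<and> 0 < alpha digit2 * p - snd a"
    using best_sim_approx_fstar_pos[of p "fst a" "snd a"] by simp
  then show "sgn (fst (approx_vec (alpha digit1, alpha digit2) p a)) = 1"
    and "sgn (snd (approx_vec (alpha digit1, alpha digit2) p a)) = 1"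
    by (simp_all add: approx_vec_def)
qed

end
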